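(* Let $n,m$ be integers with $1\le n\le m$ and let $(G,\sigma)$ be a signed graph with $G=P_n\,\square\,P_m$ (a signed grid). Then $\chi_s(G,\sigma)\le 6$. If $n\le 4$, then $\chi_s(G,\sigma)\le 5$. Moreover, there exist signed grids (signed graphs whose underlying graph is $P_n\,\square\,P_m$ for some $n,m$) with chromatic number $5$.
   Context: A signed graph $(G,\sigma)$ is a simple loopless undirected graph $G$ with a signature $\sigma:E(G)\to\{+1,-1\}$. Switching a vertex $v$ negates the sign of every edge incident to $v$; two signatures are equivalent if one is obtained from the other by switching a set of vertices. A homomorphism of $(G,\sigma)$ to $(H,\pi)$ is a graph homomorphism $\varphi:G\to H$ for which there is a signature $\sigma'$ equivalent to $\sigma$ with $\pi(\varphi(u)\varphi(v))=\sigma'(uv)$ for every edge $uv$ of $G$. $\chi_s(G,\sigma)$ is the smallest order of a signed graph to which $(G,\sigma)$ admits a homomorphism. $P_n$ is the path on $n$ vertices and $\square$ is the Cartesian product of graphs. *)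

theory Defs
  imports Main
begin

definition signed_graph :: "'a set \<Rightarrow> 'a set set \<Rightarrow> ('a set \<Rightarrow> int) \<Rightarrow> bool" where
  "signed_graph V E \<sigma> \<longleftrightarrow>
     (\<forall>e\<in>E. \<exists>u v. e = {u, v} \<and> u \<noteq> v \<and> u \<in> V \<and> v \<in> V) \<and>
     (\<forall>e\<in>E. \<sigma> e = 1 \<or> \<sigma> e = -1)"

definition switch :: "'a set \<Rightarrow> ('a set \<Rightarrow> int) \<Rightarrow> 'a set \<Rightarrow> int" where
  "switch S \<sigma> e = (if card (e \<inter> S) = 1 then - \<sigma> e else \<sigma> e)"

definition signed_hom ::
  "'a set \<Rightarrow> 'a set set \<Rightarrow> ('a set \<Rightarrow> int) \<Rightarrow> 'b set \<Rightarrow> 'b set set \<Rightarrow> ('b set \<Rightarrow> int) \<Rightarrow> ('a \<Rightarrow> 'b) \<Rightarrow> bool" where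
  "signed_hom V E \<sigma> W F \<pi> \<phi> \<longleftrightarrow>
     (\<forall>v\<in>V. \<phi> v \<in> W) \<and>
     (\<exists>S\<subseteq>V. \<forall>u v. {u, v} \<in> E \<longrightarrow>
        {\<phi> u, \<phi> v} \<in> F \<and> \<pi> {\<phi> u, \<phi> v} = switch S \<sigma> {u, v})"

text \<open>Signed chromatic number: least order of a signed graph receiving a homomorphism.
  Targets are taken (w.l.o.g., up to relabelling) on vertex set {0..<k}.\<close>
definition chi_s :: "'a set \<Rightarrow> 'a set set \<Rightarrow> ('a set \<Rightarrow> int) \<Rightarrow> nat" where
  "chi_s V E \<sigma> = (LEAST k. \<exists>(F :: nat set set) \<pi> \<phi>.
       signed_graph {..<k} F \<pi> \<and> signed_hom V E \<sigma> {..<k} F \<pi> \<phi>)"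

definition grid_V :: "nat \<Rightarrow> nat \<Rightarrow> (nat \<times> nat) set" where
  "grid_V n m = {(i, j). i < n \<and> j < m}"

definition grid_E :: "nat \<Rightarrow> nat \<Rightarrow> (nat \<times> nat) set set" where
  "grid_E n m = {{(i, j), (k, l)} | i j k l.
      (i, j) \<in> grid_V n m \<and> (k, l) \<in> grid_V n m \<and>
      ((i = k \<and> Suc j = l) \<or> (j = l \<and> Suc i = k))}"

end

(*
  A signed grid is mapped into a fixed signed complete graph one column at a time, building the
  switching along the way: if the previous column is mapped to the walk a, the next one can be
  mapped to any walk b that is adjacent to a row by row and for which the three new edges of each
  square between rows i and i+1 have a prescribed sign.  In the signed K6 with negative edges
  03, 04, 12, 14, 23 any two vertices have two common neighbours through which the path is
  positive and two through which it is negative, so b can be chosen greedily row by row while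
  avoiding the vertex of a in the next row.  For at most four rows, a set of columns of the signed
  K5 with negative edges 14, 23, 34 that is closed under this extension is checked by evaluation.

  A closed walk of length 4 that is not a 4-cycle is positive, so a homomorphism to a signed graph
  on at most four vertices maps every negative face onto a negative Hamiltonian cycle of a signed
  K4.  The three Hamiltonian cycles of K4 have sign product 1, and an exhaustive search shows that
  no 4-colouring of the 3 x 4 grid with all faces but one negative meets these constraints.
*)

theory Submission
  imports Defs
begin

section \<open>Signs, switching and 4-cycles\<close>

definition is_sign :: "int \<Rightarrow> bool" where
  "is_sign x \<longleftrightarrow> x = 1 \<or> x = -1"

lemma is_sign_one [simp]: "is_sign 1"
  and is_sign_minus_one [simp]: "is_sign (-1)"
  by (simp_all add: is_sign_def)

lemma is_sign_mult [simp]: "is_sign x \<Longrightarrow> is_sign y \<Longrightarrow> is_sign (x * y)"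
  by (auto simp: is_sign_def)

lemma is_sign_square [simp]: "is_sign x \<Longrightarrow> x * x = 1"
  by (auto simp: is_sign_def)

lemma is_sign_nonzero: "is_sign x \<Longrightarrow> x \<noteq> 0"
  by (auto simp: is_sign_def)

definition switch_sign :: "'a set \<Rightarrow> 'a \<Rightarrow> int" where
  "switch_sign S v = (if v \<in> S then -1 else 1)"

lemma is_sign_switch_sign [simp]: "is_sign (switch_sign S v)"
  by (simp add: switch_sign_def)

lemma switch_doubleton:
  assumes "u \<noteq> v"
  shows "switch S \<sigma> {u, v} = \<sigma> {u, v} * switch_sign S u * switch_sign S v"
proof -
  have "{u, v} \<inter> S = (if u \<in> S then {u} else {}) \<union> (if v \<in> S then {v} else {})"
    by auto
  then show ?thesis
    using assms by (auto simp: switch_def switch_sign_def card_insert_if)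
qed

definition cycle4_sign :: "('a set \<Rightarrow> int) \<Rightarrow> 'a \<Rightarrow> 'a \<Rightarrow> 'a \<Rightarrow> 'a \<Rightarrow> int" where
  "cycle4_sign \<sigma> a b c d = \<sigma> {a, b} * \<sigma> {b, c} * \<sigma> {c, d} * \<sigma> {d, a}"

lemma cycle4_sign_switch:
  assumes "a \<noteq> b" "b \<noteq> c" "c \<noteq> d" "d \<noteq> a"
  shows "cycle4_sign (switch S \<sigma>) a b c d = cycle4_sign \<sigma> a b c d"
proof -
  let ?s = "switch_sign S"
  have "cycle4_sign (switch S \<sigma>) a b c d =
      cycle4_sign \<sigma> a b c d * (?s a * ?s a) * (?s b * ?s b) * (?s c * ?s c) * (?s d * ?s d)"
    using assms by (simp add: cycle4_sign_def switch_doubleton ac_simps)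
  then show ?thesis
    by simp
qed

lemma cycle4_sign_degenerate:
  assumes "\<And>e. is_sign (Q e)" and "a = c \<or> b = d"
  shows "cycle4_sign Q a b c d = 1"
  using assms(2)
proof
  assume "a = c"
  then have "cycle4_sign Q a b c d = (Q {a, b} * Q {a, b}) * (Q {a, d} * Q {a, d})"
    by (simp add: cycle4_sign_def insert_commute ac_simps)
  then show ?thesis
    using assms(1) by simp
next
  assume "b = d"
  then have "cycle4_sign Q a b c d = (Q {a, b} * Q {a, b}) * (Q {b, c} * Q {b, c})"
    by (simp add: cycle4_sign_def insert_commute ac_simps)
  then show ?thesis
    using assms(1) by simp
qed

lemma signed_graph_edge_distinct:
  assumes "signed_graph V E \<sigma>" "{u, v} \<in> E"
  shows "u \<noteq> v"
proof
  assume "u = v"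
  have "\<forall>e\<in>E. \<exists>x y. e = {x, y} \<and> x \<noteq> y \<and> x \<in> V \<and> y \<in> V"
    using assms(1) unfolding signed_graph_def by (rule conjunct1)
  from bspec[OF this assms(2)] obtain x y where "{u, v} = {x, y}" "x \<noteq> y"
    by (elim exE conjE)
  then show False
    using \<open>u = v\<close> by (simp add: doubleton_eq_iff)
qed

lemma signed_graph_edge_sign: "signed_graph V E \<sigma> \<Longrightarrow> e \<in> E \<Longrightarrow> is_sign (\<sigma> e)"
  unfolding signed_graph_def is_sign_def by blast

lemma signed_hom_edge:
  assumes "signed_graph W F \<pi>" "signed_hom V E \<sigma> W F \<pi> \<phi>" "{u, v} \<in> E"
  shows "{\<phi> u, \<phi> v} \<in> F" "\<phi> u \<noteq> \<phi> v"
proof -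
  show F: "{\<phi> u, \<phi> v} \<in> F"
    using assms(2,3) unfolding signed_hom_def by blast
  show "\<phi> u \<noteq> \<phi> v"
    using signed_graph_edge_distinct[OF assms(1) F] .
qed

lemma signed_hom_cycle4_sign:
  assumes "signed_graph V E \<sigma>" "signed_hom V E \<sigma> W F \<pi> \<phi>"
    and "{a, b} \<in> E" "{b, c} \<in> E" "{c, d} \<in> E" "{d, a} \<in> E"
  shows "cycle4_sign \<pi> (\<phi> a) (\<phi> b) (\<phi> c) (\<phi> d) = cycle4_sign \<sigma> a b c d"
proof -
  obtain S where S: "\<forall>u v. {u, v} \<in> E \<longrightarrow> \<pi> {\<phi> u, \<phi> v} = switch S \<sigma> {u, v}"
    using assms(2) unfolding signed_hom_def by blast
  have "cycle4_sign \<pi> (\<phi> a) (\<phi> b) (\<phi> c) (\<phi> d) = cycle4_sign (switch S \<sigma>) a b c d"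
    using S assms(3-6) unfolding cycle4_sign_def by metis
  also have "\<dots> = cycle4_sign \<sigma> a b c d"
    using assms(3-6) signed_graph_edge_distinct[OF assms(1)] by (intro cycle4_sign_switch) blast+
  finally show ?thesis .
qed

lemma chi_s_le:
  fixes F :: "nat set set"
  assumes "signed_graph {..<K} F \<pi>" "signed_hom V E \<sigma> {..<K} F \<pi> \<phi>"
  shows "chi_s V E \<sigma> \<le> K"
  unfolding chi_s_def by (rule Least_le) (use assms in blast)

lemma chi_s_attained:
  fixes F :: "nat set set"
  assumes "signed_graph {..<K} F \<pi>" "signed_hom V E \<sigma> {..<K} F \<pi> \<phi>"
  obtains F' :: "nat set set" and \<pi>' \<phi>' where
    "signed_graph {..<chi_s V E \<sigma>} F' \<pi>'" "signed_hom V E \<sigma> {..<chi_s V E \<sigma>} F' \<pi>' \<phi>'"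
  using LeastI_ex[of "\<lambda>k. \<exists>(F :: nat set set) \<pi> \<phi>.
      signed_graph {..<k} F \<pi> \<and> signed_hom V E \<sigma> {..<k} F \<pi> \<phi>"] assms that
  unfolding chi_s_def by blast

lemma grid_E_cases:
  assumes "e \<in> grid_E n m"
  obtains i j where "i < n" "Suc j < m" "e = {(i, j), (i, Suc j)}"
  | i j where "Suc i < n" "j < m" "e = {(i, j), (Suc i, j)}"
proof -
  obtain i j k l where e: "e = {(i, j), (k, l)}" "(i, j) \<in> grid_V n m" "(k, l) \<in> grid_V n m"
    and adj: "(i = k \<and> Suc j = l) \<or> (j = l \<and> Suc i = k)"
    using assms unfolding grid_E_def by (simp only: mem_Collect_eq) (elim exE conjE, rule that)
  from adj show thesis
    using e that unfolding grid_V_def by auto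
qed

lemma grid_E_row_edge: "i < n \<Longrightarrow> Suc j < m \<Longrightarrow> {(i, j), (i, Suc j)} \<in> grid_E n m"
  unfolding grid_E_def grid_V_def
  by (intro CollectI exI[of _ i] exI[of _ j] exI[of _ i] exI[of _ "Suc j"]) simp

lemma grid_E_column_edge: "Suc i < n \<Longrightarrow> j < m \<Longrightarrow> {(i, j), (Suc i, j)} \<in> grid_E n m"
  unfolding grid_E_def grid_V_def
  by (intro CollectI exI[of _ i] exI[of _ j] exI[of _ "Suc i"] exI[of _ j]) simp

lemma grid_E_face:
  assumes "Suc i < n" "Suc j < m"
  shows "{(i, j), (i, Suc j)} \<in> grid_E n m" "{(i, Suc j), (Suc i, Suc j)} \<in> grid_E n m"
    "{(Suc i, Suc j), (Suc i, j)} \<in> grid_E n m" "{(Suc i, j), (i, j)} \<in> grid_E n m"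
  using assms grid_E_row_edge[of "Suc i" n j m] grid_E_column_edge[of i n j m]
  by (auto intro: grid_E_row_edge grid_E_column_edge simp: insert_commute)

lemma signed_graph_grid:
  assumes "\<And>e. e \<in> grid_E n m \<Longrightarrow> is_sign (\<sigma> e)"
  shows "signed_graph (grid_V n m) (grid_E n m) \<sigma>"
  unfolding signed_graph_def
proof (intro conjI ballI)
  fix e assume e: "e \<in> grid_E n m"
  then show "\<exists>u v. e = {u, v} \<and> u \<noteq> v \<and> u \<in> grid_V n m \<and> v \<in> grid_V n m"
  proof (cases rule: grid_E_cases)
    case (1 i j)
    then show ?thesis
      unfolding grid_V_def by (intro exI[of _ "(i, j)"] exI[of _ "(i, Suc j)"]) simp
  next
    case (2 i j)
    then show ?thesis
      unfolding grid_V_def by (intro exI[of _ "(i, j)"] exI[of _ "(Suc i, j)"]) simp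
  qed
  show "\<sigma> e = 1 \<or> \<sigma> e = -1"
    using assms[OF e] unfolding is_sign_def .
qed
section \<open>Mapping a signed grid column by column\<close>

text \<open>A signed graph on \<open>{..<K}\<close> given by its signed adjacency matrix: \<open>P a b\<close> is the sign of the
  edge \<open>{a, b}\<close>, and \<open>0\<close> if there is no such edge.\<close>

definition signed_adjacency :: "nat \<Rightarrow> (nat \<Rightarrow> nat \<Rightarrow> int) \<Rightarrow> bool" where
  "signed_adjacency K P \<longleftrightarrow> (\<forall>a b. P a b = P b a) \<and> (\<forall>a. P a a = 0) \<and>
     (\<forall>a b. P a b \<noteq> 0 \<longrightarrow> is_sign (P a b) \<and> a < K \<and> b < K)"

definition adjacency_edges :: "(nat \<Rightarrow> nat \<Rightarrow> int) \<Rightarrow> nat set set" where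
  "adjacency_edges P = {{a, b} | a b. P a b \<noteq> 0}"

definition adjacency_signature :: "(nat \<Rightarrow> nat \<Rightarrow> int) \<Rightarrow> nat set \<Rightarrow> int" where
  "adjacency_signature P e = P (Min e) (Max e)"

lemma signed_adjacency_sign:
  "signed_adjacency K P \<Longrightarrow> P a b \<noteq> 0 \<Longrightarrow> is_sign (P a b) \<and> a < K \<and> b < K"
  unfolding signed_adjacency_def by blast

lemma adjacency_signature_doubleton:
  "signed_adjacency K P \<Longrightarrow> adjacency_signature P {a, b} = P a b"
  unfolding adjacency_signature_def signed_adjacency_def
  by (cases "a \<le> b") (auto simp: min_def max_def)

lemma signed_graph_adjacency:
  assumes P: "signed_adjacency K P"
  shows "signed_graph {..<K} (adjacency_edges P) (adjacency_signature P)"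
  unfolding signed_graph_def
proof (intro conjI ballI)
  fix e assume "e \<in> adjacency_edges P"
  then obtain a b where e: "e = {a, b}" and ab: "P a b \<noteq> 0"
    unfolding adjacency_edges_def by blast
  have "a \<noteq> b"
    using ab P unfolding signed_adjacency_def by auto
  then show "\<exists>u v. e = {u, v} \<and> u \<noteq> v \<and> u \<in> {..<K} \<and> v \<in> {..<K}"
    using e signed_adjacency_sign[OF P ab] by blast
  show "adjacency_signature P e = 1 \<or> adjacency_signature P e = -1"
    using e signed_adjacency_sign[OF P ab] adjacency_signature_doubleton[OF P]
    unfolding is_sign_def by simp
qed

definition complete_signing :: "nat \<Rightarrow> (nat \<times> nat) list \<Rightarrow> nat \<Rightarrow> nat \<Rightarrow> int" where
  "complete_signing K negs a b =
     (if a = b \<or> K \<le> a \<or> K \<le> b then 0 else if (min a b, max a b) \<in> set negs then -1 else 1)"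

lemma signed_adjacency_complete_signing: "signed_adjacency K (complete_signing K negs)"
  unfolding signed_adjacency_def complete_signing_def
  by (auto simp: min.commute max.commute)

text \<open>The square between rows \<open>i\<close> and \<open>i + 1\<close> of consecutive columns \<open>a\<close> and \<open>b\<close> has the
  edge \<open>a i -- a (Suc i)\<close> already coloured; \<open>w i\<close> prescribes the sign of its other three edges.\<close>

definition face_compatible ::
  "nat \<Rightarrow> (nat \<Rightarrow> nat \<Rightarrow> int) \<Rightarrow> (nat \<Rightarrow> nat) \<Rightarrow> (nat \<Rightarrow> int) \<Rightarrow> (nat \<Rightarrow> nat) \<Rightarrow> bool" where
  "face_compatible n P a w b \<longleftrightarrow> (\<forall>i<n. P (a i) (b i) \<noteq> 0) \<and>
     (\<forall>i. Suc i < n \<longrightarrow> P (b i) (b (Suc i)) * P (a i) (b i) * P (a (Suc i)) (b (Suc i)) = w i)"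

lemma face_compatible_mono:
  "face_compatible n' P a w b \<Longrightarrow> n \<le> n' \<Longrightarrow> face_compatible n P a w b"
  unfolding face_compatible_def by auto

lemma face_compatible_extend:
  assumes "face_compatible (Suc N) P a w b" "P (a (Suc N)) c \<noteq> 0"
    and "P (b N) c * P (a N) (b N) * P (a (Suc N)) c = w N"
  shows "face_compatible (Suc (Suc N)) P a w (b(Suc N := c))"
  unfolding face_compatible_def
proof (intro conjI allI impI)
  fix i assume "i < Suc (Suc N)"
  then show "P (a i) ((b(Suc N := c)) i) \<noteq> 0"
    using assms unfolding face_compatible_def by (cases "i = Suc N") auto
next
  fix i assume "Suc i < Suc (Suc N)"
  then show "P ((b(Suc N := c)) i) ((b(Suc N := c)) (Suc i)) * P (a i) ((b(Suc N := c)) i) *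
      P (a (Suc i)) ((b(Suc N := c)) (Suc i)) = w i"
    using assms unfolding face_compatible_def by (cases "i = N") auto
qed

definition columns_extendable :: "nat \<Rightarrow> (nat \<Rightarrow> nat \<Rightarrow> int) \<Rightarrow> (nat \<Rightarrow> nat) set \<Rightarrow> bool" where
  "columns_extendable n P G \<longleftrightarrow>
     (\<forall>a\<in>G. \<forall>w. (\<forall>i. is_sign (w i)) \<longrightarrow> (\<exists>b\<in>G. face_compatible n P a w b))"

lemma next_column:
  assumes P: "signed_adjacency K P" and ext: "columns_extendable n P G" and "a \<in> G"
    and h: "\<And>i. i < n \<Longrightarrow> is_sign (h i)" and v: "\<And>i. Suc i < n \<Longrightarrow> is_sign (v i)"
  obtains b t where "b \<in> G"
    and "\<And>i. i < n \<Longrightarrow> b i < K \<and> is_sign (t i) \<and> P (a i) (b i) = h i * t i"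
    and "\<And>i. Suc i < n \<Longrightarrow> P (b i) (b (Suc i)) = v i * t i * t (Suc i)"
proof -
  define w where "w i = (if Suc i < n then v i * h i * h (Suc i) else 1)" for i
  have "is_sign (w i)" for i
    using h v unfolding w_def by auto
  then obtain b where "b \<in> G" and b: "face_compatible n P a w b"
    using ext \<open>a \<in> G\<close> unfolding columns_extendable_def by blast
  have ab: "is_sign (P (a i) (b i)) \<and> b i < K" if "i < n" for i
    using b that signed_adjacency_sign[OF P] unfolding face_compatible_def by blast
  \<comment> \<open>switching \<open>b i\<close> by \<open>t i\<close> turns the sign of the edge \<open>a i -- b i\<close> into \<open>h i\<close>\<close>
  define t where "t i = P (a i) (b i) * h i" for i
  show thesis
  proof (rule that[OF \<open>b \<in> G\<close>])
    fix i assume "i < n"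
    then show "b i < K \<and> is_sign (t i) \<and> P (a i) (b i) = h i * t i"
      using ab h unfolding t_def by (simp add: mult.left_commute)
  next
    fix i assume i: "Suc i < n"
    have face:
      "P (b i) (b (Suc i)) * P (a i) (b i) * P (a (Suc i)) (b (Suc i)) = v i * h i * h (Suc i)"
      using b i unfolding face_compatible_def w_def by simp
    have "P (b i) (b (Suc i)) = P (b i) (b (Suc i)) * (P (a i) (b i) * P (a i) (b i)) *
        (P (a (Suc i)) (b (Suc i)) * P (a (Suc i)) (b (Suc i)))"
      using ab i by simp
    also have "\<dots> = (P (b i) (b (Suc i)) * P (a i) (b i) * P (a (Suc i)) (b (Suc i))) *
        P (a i) (b i) * P (a (Suc i)) (b (Suc i))"
      by (simp only: ac_simps)
    also have "\<dots> = v i * h i * h (Suc i) * P (a i) (b i) * P (a (Suc i)) (b (Suc i))"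
      by (simp only: face)
    also have "\<dots> = v i * t i * t (Suc i)"
      unfolding t_def by (simp add: ac_simps)
    finally show "P (b i) (b (Suc i)) = v i * t i * t (Suc i)" .
  qed
qed

text \<open>\<open>C j i\<close> is the image of the grid vertex \<open>(i, j)\<close> and \<open>T j i\<close> its switching sign; the first
  \<open>k\<close> columns are mapped.\<close>

definition column_hom ::
  "nat \<Rightarrow> nat \<Rightarrow> nat \<Rightarrow> (nat \<Rightarrow> nat \<Rightarrow> int) \<Rightarrow> ((nat \<times> nat) set \<Rightarrow> int) \<Rightarrow>
   (nat \<Rightarrow> nat \<Rightarrow> nat) \<Rightarrow> (nat \<Rightarrow> nat \<Rightarrow> int) \<Rightarrow> bool" where
  "column_hom n k K P \<sigma> C T \<longleftrightarrow>
     (\<forall>j<k. \<forall>i<n. C j i < K \<and> is_sign (T j i)) \<and>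
     (\<forall>j<k. \<forall>i. Suc i < n \<longrightarrow>
        P (C j i) (C j (Suc i)) = \<sigma> {(i, j), (Suc i, j)} * T j i * T j (Suc i)) \<and>
     (\<forall>j. Suc j < k \<longrightarrow> (\<forall>i<n.
        P (C j i) (C (Suc j) i) = \<sigma> {(i, j), (i, Suc j)} * T j i * T (Suc j) i))"

lemma column_hom_exists:
  assumes P: "signed_adjacency K P" and ext: "columns_extendable n P G" and "G \<noteq> {}"
    and \<sigma>: "signed_graph (grid_V n m) (grid_E n m) \<sigma>" and "k < m"
  shows "\<exists>C T. column_hom n (Suc k) K P \<sigma> C T \<and> C k \<in> G"
  using \<open>k < m\<close>
proof (induction k)
  case 0
  obtain a where "a \<in> G"
    using \<open>G \<noteq> {}\<close> by blast
  have v: "is_sign (\<sigma> {(i, 0), (Suc i, 0)})" if "Suc i < n" for i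
    using signed_graph_edge_sign[OF \<sigma> grid_E_column_edge] that 0 by blast
  obtain b t where "b \<in> G" and b: "\<And>i. i < n \<Longrightarrow> b i < K \<and> is_sign (t i) \<and> P (a i) (b i) = 1 * t i"
    and col: "\<And>i. Suc i < n \<Longrightarrow> P (b i) (b (Suc i)) = \<sigma> {(i, 0), (Suc i, 0)} * t i * t (Suc i)"
    using next_column[OF P ext \<open>a \<in> G\<close>, of "\<lambda>_. 1" "\<lambda>i. \<sigma> {(i, 0), (Suc i, 0)}"] v is_sign_one
    by blast
  have "column_hom n 1 K P \<sigma> (\<lambda>_. b) (\<lambda>_. t)"
    unfolding column_hom_def using b col by auto
  then show ?case
    using \<open>b \<in> G\<close> by auto
next
  case (Suc k)
  then obtain C T where CT: "column_hom n (Suc k) K P \<sigma> C T" and "C k \<in> G"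
    by auto
  define h where "h i = \<sigma> {(i, k), (i, Suc k)} * T k i" for i
  have h: "is_sign (h i)" if "i < n" for i
    using CT signed_graph_edge_sign[OF \<sigma> grid_E_row_edge] that Suc.prems
    unfolding column_hom_def h_def by auto
  have v: "is_sign (\<sigma> {(i, Suc k), (Suc i, Suc k)})" if "Suc i < n" for i
    using signed_graph_edge_sign[OF \<sigma> grid_E_column_edge] that Suc.prems by blast
  obtain b t where "b \<in> G"
    and b: "\<And>i. i < n \<Longrightarrow> b i < K \<and> is_sign (t i) \<and> P (C k i) (b i) = h i * t i"
    and col: "\<And>i. Suc i < n \<Longrightarrow>
      P (b i) (b (Suc i)) = \<sigma> {(i, Suc k), (Suc i, Suc k)} * t i * t (Suc i)"
    using next_column[OF P ext \<open>C k \<in> G\<close>, of h "\<lambda>i. \<sigma> {(i, Suc k), (Suc i, Suc k)}"] h v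
    by blast
  have "column_hom n (Suc (Suc k)) K P \<sigma> (C(Suc k := b)) (T(Suc k := t))"
    using CT b col unfolding column_hom_def h_def by (auto simp: less_Suc_eq mult.assoc)
  then show ?case
    using \<open>b \<in> G\<close> by auto
qed

lemma adjacency_edge:
  assumes "signed_adjacency K P" "P a b = s" "is_sign s"
  shows "{a, b} \<in> adjacency_edges P" "adjacency_signature P {a, b} = s"
  using assms is_sign_nonzero adjacency_signature_doubleton[OF assms(1)]
  unfolding adjacency_edges_def by auto

definition column_switching :: "nat \<Rightarrow> nat \<Rightarrow> (nat \<Rightarrow> nat \<Rightarrow> int) \<Rightarrow> (nat \<times> nat) set" where
  "column_switching n m T = {(i, j) \<in> grid_V n m. T j i = -1}"

lemma column_hom_edge:
  assumes P: "signed_adjacency K P" and CT: "column_hom n m K P \<sigma> C T" and "{x, y} \<in> grid_E n m"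
  shows "P ((\<lambda>(i, j). C j i) x) ((\<lambda>(i, j). C j i) y) = switch (column_switching n m T) \<sigma> {x, y}"
proof -
  let ?S = "column_switching n m T"
  have T: "switch_sign ?S (i, j) = T j i" if "i < n" "j < m" for i j
    using CT that unfolding column_hom_def column_switching_def switch_sign_def is_sign_def grid_V_def
    by auto
  have P_sym: "P a b = P b a" for a b
    using P unfolding signed_adjacency_def by blast
  from \<open>{x, y} \<in> grid_E n m\<close> show ?thesis
  proof (cases rule: grid_E_cases)
    case (1 i j)
    have "P (C j i) (C (Suc j) i) = \<sigma> {(i, j), (i, Suc j)} * T j i * T (Suc j) i"
      using CT 1 unfolding column_hom_def by blast
    also have "\<dots> = switch ?S \<sigma> {(i, j), (i, Suc j)}"
      using 1 by (simp add: switch_doubleton T)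
    finally show ?thesis
      using 1 P_sym by (auto simp: doubleton_eq_iff insert_commute)
  next
    case (2 i j)
    have "P (C j i) (C j (Suc i)) = \<sigma> {(i, j), (Suc i, j)} * T j i * T j (Suc i)"
      using CT 2 unfolding column_hom_def by blast
    also have "\<dots> = switch ?S \<sigma> {(i, j), (Suc i, j)}"
      using 2 by (simp add: switch_doubleton T)
    finally show ?thesis
      using 2 P_sym by (auto simp: doubleton_eq_iff insert_commute)
  qed
qed

lemma signed_hom_of_column_hom:
  assumes P: "signed_adjacency K P" and CT: "column_hom n m K P \<sigma> C T"
    and \<sigma>: "signed_graph (grid_V n m) (grid_E n m) \<sigma>"
  shows "signed_hom (grid_V n m) (grid_E n m) \<sigma> {..<K} (adjacency_edges P) (adjacency_signature P)
    (\<lambda>(i, j). C j i)" (is "signed_hom _ _ _ _ _ _ ?\<phi>")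
proof -
  let ?S = "column_switching n m T"
  have "{?\<phi> x, ?\<phi> y} \<in> adjacency_edges P \<and> adjacency_signature P {?\<phi> x, ?\<phi> y} = switch ?S \<sigma> {x, y}"
    if xy: "{x, y} \<in> grid_E n m" for x y
  proof -
    have "is_sign (switch ?S \<sigma> {x, y})"
      using signed_graph_edge_distinct[OF \<sigma> xy] signed_graph_edge_sign[OF \<sigma> xy]
      by (simp add: switch_doubleton)
    then show ?thesis
      using adjacency_edge[OF P column_hom_edge[OF P CT xy]] by blast
  qed
  moreover have "?\<phi> v \<in> {..<K}" if "v \<in> grid_V n m" for v
    using CT that unfolding column_hom_def grid_V_def by auto
  moreover have "?S \<subseteq> grid_V n m"
    unfolding column_switching_def by blast
  ultimately show ?thesis
    unfolding signed_hom_def by blast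
qed

lemma grid_hom_exists:
  assumes \<sigma>: "signed_graph (grid_V n m) (grid_E n m) \<sigma>" and "0 < m"
    and P: "signed_adjacency K P" and ext: "columns_extendable n P G" and "G \<noteq> {}"
  shows "\<exists>\<phi>. signed_hom (grid_V n m) (grid_E n m) \<sigma>
    {..<K} (adjacency_edges P) (adjacency_signature P) \<phi>"
proof -
  obtain C T where "column_hom n m K P \<sigma> C T"
    using column_hom_exists[OF P ext \<open>G \<noteq> {}\<close> \<sigma>, of "m - 1"] \<open>0 < m\<close> by auto
  then show ?thesis
    using signed_hom_of_column_hom[OF P _ \<sigma>] by blast
qed

lemma chi_s_grid_le:
  assumes "signed_graph (grid_V n m) (grid_E n m) \<sigma>" "0 < m"
    and P: "signed_adjacency K P" and "columns_extendable n P G" "G \<noteq> {}"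
  shows "chi_s (grid_V n m) (grid_E n m) \<sigma> \<le> K"
  using grid_hom_exists[OF assms] chi_s_le[OF signed_graph_adjacency[OF P]] by blast

section \<open>Six colours suffice\<close>

lemma exists_filter_avoiding:
  assumes "distinct xs" "2 \<le> length (filter p xs)"
  obtains c where "c \<in> set xs" "p c" "c \<noteq> d"
proof -
  obtain c c' cs where cs: "filter p xs = c # c' # cs"
    using assms(2) by (auto simp: Suc_le_length_iff numeral_2_eq_2)
  have "c \<noteq> c'"
    using distinct_filter[OF assms(1), of p] cs by simp
  moreover have "c \<in> set (filter p xs)" "c' \<in> set (filter p xs)"
    using cs by simp_all
  ultimately show thesis
    using that by (cases "c = d") auto
qed

definition K6_signing :: "nat \<Rightarrow> nat \<Rightarrow> int" where
  "K6_signing = complete_signing 6 [(0, 3), (0, 4), (1, 2), (1, 4), (2, 3)]"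

lemma K6_two_common_neighbours:
  assumes "x < 6" "y < 6" "x \<noteq> y" "is_sign s"
  shows "2 \<le> length (filter (\<lambda>c. K6_signing x c * K6_signing y c = s) [0..<6])"
proof -
  have "list_all (\<lambda>x. list_all (\<lambda>y. x = y \<or> list_all (\<lambda>s.
      2 \<le> length (filter (\<lambda>c. K6_signing x c * K6_signing y c = s) [0..<6])) [1, -1]) [0..<6]) [0..<6]"
    by code_simp
  then have "\<forall>x\<in>set [0..<6]. \<forall>y\<in>set [0..<6]. x = y \<or> (\<forall>s\<in>set [1, -1].
      2 \<le> length (filter (\<lambda>c. K6_signing x c * K6_signing y c = s) [0..<6]))"
    unfolding list_all_iff .
  moreover have "x \<in> set [0..<6]" "y \<in> set [0..<6]" "s \<in> set [1, -1]"
    using assms unfolding is_sign_def by auto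
  ultimately show ?thesis
    using assms(3) by (meson bspec)
qed

lemma K6_common_neighbour_avoiding:
  assumes "x < 6" "y < 6" "x \<noteq> y" "is_sign s"
  obtains c where "c \<noteq> d" "K6_signing x c * K6_signing y c = s"
proof (rule exists_filter_avoiding[OF distinct_upt K6_two_common_neighbours[OF assms], of d])
  show "K6_signing x c * K6_signing y c = s \<Longrightarrow> c \<noteq> d \<Longrightarrow> thesis" for c
    using that by blast
qed

lemma signed_adjacency_K6: "signed_adjacency 6 K6_signing"
  unfolding K6_signing_def by (rule signed_adjacency_complete_signing)

lemma K6_product_sign:
  assumes "K6_signing x c * K6_signing y c = s" "is_sign s"
  shows "K6_signing x c \<noteq> 0" "K6_signing y c \<noteq> 0" "c < 6"
proof -
  show x: "K6_signing x c \<noteq> 0" and "K6_signing y c \<noteq> 0"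
    using assms is_sign_nonzero by fastforce+
  show "c < 6"
    using signed_adjacency_sign[OF signed_adjacency_K6 x] by blast
qed

lemma K6_neighbour_avoiding:
  assumes "x < 6"
  obtains c where "c \<noteq> d" "K6_signing x c \<noteq> 0" "c < 6"
proof -
  define y where "y = (if x = 0 then 1 else 0 :: nat)"
  obtain c where c: "c \<noteq> d" "K6_signing x c * K6_signing y c = 1"
    by (rule K6_common_neighbour_avoiding[of x y 1 d]) (use assms in \<open>auto simp: y_def\<close>)
  then show thesis
    using that K6_product_sign[OF c(2)] by simp
qed

lemma K6_column_prefix:
  assumes a: "\<forall>i. a i < 6" and w: "\<forall>i. is_sign (w i)"
  shows "\<exists>b. (\<forall>i. b i < 6) \<and> b N \<noteq> a (Suc N) \<and> face_compatible (Suc N) K6_signing a w b"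
proof (induction N)
  case 0
  obtain c where "c \<noteq> a 1" "K6_signing (a 0) c \<noteq> 0" "c < 6"
    using K6_neighbour_avoiding a by blast
  then have "(\<forall>i. c < 6) \<and> c \<noteq> a (Suc 0) \<and> face_compatible (Suc 0) K6_signing a w (\<lambda>_. c)"
    unfolding face_compatible_def by simp
  then show ?case
    by (intro exI[of _ "\<lambda>_. c"])
next
  case (Suc N)
  then obtain b where b: "\<forall>i. b i < 6" "b N \<noteq> a (Suc N)"
    "face_compatible (Suc N) K6_signing a w b"
    by blast
  have "K6_signing (a N) (b N) \<noteq> 0"
    using b(3) unfolding face_compatible_def by simp
  then have ab: "is_sign (K6_signing (a N) (b N))"
    using signed_adjacency_sign[OF signed_adjacency_K6] by blast
  then have s: "is_sign (w N * K6_signing (a N) (b N))"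
    using w by simp
  obtain c where c: "c \<noteq> a (Suc (Suc N))"
    and face: "K6_signing (b N) c * K6_signing (a (Suc N)) c = w N * K6_signing (a N) (b N)"
    using K6_common_neighbour_avoiding[OF _ _ b(2) s] a b(1) by metis
  have nz: "K6_signing (a (Suc N)) c \<noteq> 0" "c < 6"
    using K6_product_sign[OF face s] by auto
  have "K6_signing (b N) c * K6_signing (a N) (b N) * K6_signing (a (Suc N)) c =
      (K6_signing (b N) c * K6_signing (a (Suc N)) c) * K6_signing (a N) (b N)"
    by (simp only: ac_simps)
  also have "\<dots> = w N * (K6_signing (a N) (b N) * K6_signing (a N) (b N))"
    by (simp only: face mult.assoc)
  also have "\<dots> = w N"
    using ab by simp
  finally have "face_compatible (Suc (Suc N)) K6_signing a w (b(Suc N := c))"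
    using face_compatible_extend[OF b(3) nz(1)] by blast
  then have "(\<forall>i. (b(Suc N := c)) i < 6) \<and> (b(Suc N := c)) (Suc N) \<noteq> a (Suc (Suc N)) \<and>
      face_compatible (Suc (Suc N)) K6_signing a w (b(Suc N := c))"
    using b(1) c nz by simp
  then show ?case
    by blast
qed

lemma K6_columns_extendable: "columns_extendable n K6_signing {a. \<forall>i. a i < 6}"
  unfolding columns_extendable_def
proof (intro ballI allI impI)
  fix a :: "nat \<Rightarrow> nat" and w :: "nat \<Rightarrow> int"
  assume "a \<in> {a. \<forall>i. a i < 6}" "\<forall>i. is_sign (w i)"
  then obtain b where "\<forall>i. b i < 6" "face_compatible (Suc n) K6_signing a w b"
    using K6_column_prefix[of a w n] by auto
  then show "\<exists>b\<in>{a. \<forall>i. a i < 6}. face_compatible n K6_signing a w b"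
    using face_compatible_mono[of "Suc n" K6_signing a w b n] by auto
qed

section \<open>Five colours suffice for at most four rows\<close>

fun face_compatible4 ::
  "(nat \<Rightarrow> nat \<Rightarrow> int) \<Rightarrow> nat \<times> nat \<times> nat \<times> nat \<Rightarrow> int \<times> int \<times> int \<Rightarrow> nat \<times> nat \<times> nat \<times> nat \<Rightarrow> bool"
  where
  "face_compatible4 P (a0, a1, a2, a3) (w0, w1, w2) (b0, b1, b2, b3) \<longleftrightarrow>
     P a0 b0 \<noteq> 0 \<and> P a1 b1 \<noteq> 0 \<and> P a2 b2 \<noteq> 0 \<and> P a3 b3 \<noteq> 0 \<and>
     P b0 b1 * P a0 b0 * P a1 b1 = w0 \<and> P b1 b2 * P a1 b1 * P a2 b2 = w1 \<and>
     P b2 b3 * P a2 b2 * P a3 b3 = w2"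

lemma face_compatible4_iff:
  "face_compatible4 P (a 0, a 1, a 2, a 3) (w 0, w 1, w 2) (b 0, b 1, b 2, b 3) \<longleftrightarrow>
   face_compatible 4 P a w b"
  unfolding face_compatible_def by (auto simp: less_Suc_eq numeral_eq_Suc)

definition K5_signing :: "nat \<Rightarrow> nat \<Rightarrow> int" where
  "K5_signing = complete_signing 5 [(1, 4), (2, 3), (3, 4)]"

lemma signed_adjacency_K5: "signed_adjacency 5 K5_signing"
  unfolding K5_signing_def by (rule signed_adjacency_complete_signing)

text \<open>Found by computer search; the set of all 320 proper columns is closed as well, but this
  smaller one is faster to check.\<close>

definition K5_columns :: "(nat \<times> nat \<times> nat \<times> nat) list" where
  "K5_columns =
    [(0, 1, 2, 0), (0, 1, 3, 2), (0, 1, 4, 0), (0, 1, 4, 2), (0, 1, 4, 3), (0, 2, 1, 3), (0, 2, 3, 1),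
     (0, 3, 1, 2), (0, 4, 2, 3), (0, 4, 3, 0), (1, 0, 3, 0), (1, 0, 4, 0), (1, 2, 0, 3), (1, 2, 4, 0),
     (1, 3, 0, 1), (1, 3, 0, 4), (1, 3, 2, 0), (1, 4, 0, 2), (2, 1, 2, 0), (2, 3, 0, 1), (2, 3, 1, 4),
     (2, 3, 4, 1), (2, 4, 0, 1), (2, 4, 0, 3), (2, 4, 0, 4), (2, 4, 2, 1), (2, 4, 3, 4), (3, 0, 1, 2),
     (3, 0, 3, 1), (3, 1, 0, 2), (3, 1, 2, 4), (3, 1, 4, 0), (3, 1, 4, 2), (3, 2, 1, 3), (3, 2, 3, 1),
     (3, 4, 0, 4), (3, 4, 1, 4), (4, 0, 1, 2), (4, 0, 1, 4), (4, 0, 2, 3), (4, 0, 3, 1), (4, 2, 3, 0),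
     (4, 2, 3, 4), (4, 2, 4, 3)]"

definition sign_triples :: "(int \<times> int \<times> int) list" where
  "sign_triples = List.product [1, -1] (List.product [1, -1] [1, -1])"

lemma sign_triples_complete:
  "is_sign x \<Longrightarrow> is_sign y \<Longrightarrow> is_sign z \<Longrightarrow> (x, y, z) \<in> set sign_triples"
  unfolding sign_triples_def is_sign_def by auto

lemma K5_columns_closed:
  "list_all (\<lambda>a. list_all (\<lambda>w. List.find (face_compatible4 K5_signing a w) K5_columns \<noteq> None)
     sign_triples) K5_columns"
  by code_simp

definition K5_column_set :: "(nat \<Rightarrow> nat) set" where
  "K5_column_set = {a. (a 0, a 1, a 2, a 3) \<in> set K5_columns}"

lemma K5_column_set_nonempty: "K5_column_set \<noteq> {}"
proof -
  have "(!) [0, 1, 2, 0] \<in> K5_column_set"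
    by (simp add: K5_column_set_def K5_columns_def)
  then show ?thesis
    by blast
qed

lemma K5_columns_extendable:
  assumes "n \<le> 4"
  shows "columns_extendable n K5_signing K5_column_set"
  unfolding columns_extendable_def
proof (intro ballI allI impI)
  fix a :: "nat \<Rightarrow> nat" and w :: "nat \<Rightarrow> int"
  assume a: "a \<in> K5_column_set" and w: "\<forall>i. is_sign (w i)"
  have "(w 0, w 1, w 2) \<in> set sign_triples"
    using w by (simp add: sign_triples_complete)
  moreover have "(a 0, a 1, a 2, a 3) \<in> set K5_columns"
    using a unfolding K5_column_set_def by simp
  ultimately have
    "List.find (face_compatible4 K5_signing (a 0, a 1, a 2, a 3) (w 0, w 1, w 2)) K5_columns \<noteq> None"
    using K5_columns_closed unfolding list_all_iff by (meson bspec)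
  then obtain b0 b1 b2 b3 where b: "(b0, b1, b2, b3) \<in> set K5_columns"
    and face: "face_compatible4 K5_signing (a 0, a 1, a 2, a 3) (w 0, w 1, w 2) (b0, b1, b2, b3)"
    unfolding find_None_iff by auto
  define b where "b = (!) [b0, b1, b2, b3]"
  have "b \<in> K5_column_set"
    using b unfolding b_def K5_column_set_def by simp
  moreover have "face_compatible 4 K5_signing a w b"
    using face unfolding b_def face_compatible4_iff[symmetric] by simp
  ultimately show "\<exists>b\<in>K5_column_set. face_compatible n K5_signing a w b"
    using face_compatible_mono assms by blast
qed

section \<open>A signed grid that needs five colours\<close>

text \<open>Every face of the 3 x 4 grid is negative except the one with corners \<open>(0, 1)\<close> and \<open>(1, 2)\<close>.\<close>

definition grid34_signature :: "(nat \<times> nat) set \<Rightarrow> int" where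
  "grid34_signature e = (if e \<in> {{(1, 0), (1, 1)}, {(2, 1), (2, 2)}, {(1, 2), (1, 3)}} then -1 else 1)"

lemma signed_graph_grid34: "signed_graph (grid_V 3 4) (grid_E 3 4) grid34_signature"
  by (rule signed_graph_grid) (simp add: grid34_signature_def)

lemma is_sign_cycle4_sign: "(\<And>e. is_sign (Q e)) \<Longrightarrow> is_sign (cycle4_sign Q a b c d)"
  unfolding cycle4_sign_def by simp

text \<open>The Hamiltonian cycles of \<open>K\<^sub>4\<close> on \<open>{0..3}\<close> are indexed by their pairs of diagonals
  01|23, 02|13, 03|12; for distinct \<open>a, c < 4\<close>, \<open>matching_index a c\<close> is the index of the pair
  containing the diagonal \<open>{a, c}\<close>.\<close>

definition matching_index :: "nat \<Rightarrow> nat \<Rightarrow> nat" where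
  "matching_index a c = (if a + c = 1 \<or> a + c = 5 then 0 else if a + c = 2 \<or> a + c = 4 then 1 else 2)"

definition K4_cycle_signs :: "(nat set \<Rightarrow> int) \<Rightarrow> int list" where
  "K4_cycle_signs Q = [cycle4_sign Q 0 2 1 3, cycle4_sign Q 0 1 2 3, cycle4_sign Q 0 1 3 2]"

lemma sign_triple_product_one:
  "is_sign x \<Longrightarrow> is_sign y \<Longrightarrow> is_sign z \<Longrightarrow> x * y * z = 1 \<Longrightarrow>
   [x, y, z] \<in> set [[1, 1, 1], [1, -1, -1], [-1, 1, -1], [-1, -1, 1]]"
  unfolding is_sign_def by auto

lemma K4_cycle_signs_cases:
  assumes Q: "\<And>e. is_sign (Q e)"
  shows "K4_cycle_signs Q \<in> set [[1, 1, 1], [1, -1, -1], [-1, 1, -1], [-1, -1, 1]]"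
proof -
  \<comment> \<open>every edge lies on exactly two of the three cycles\<close>
  have "cycle4_sign Q 0 2 1 3 * cycle4_sign Q 0 1 2 3 * cycle4_sign Q 0 1 3 2 =
      (Q {0, 1} * Q {0, 1}) * (Q {0, 2} * Q {0, 2}) * (Q {0, 3} * Q {0, 3}) *
      (Q {1, 2} * Q {1, 2}) * (Q {1, 3} * Q {1, 3}) * (Q {2, 3} * Q {2, 3})"
    by (simp add: cycle4_sign_def insert_commute ac_simps)
  also have "\<dots> = 1"
    using Q by simp
  finally show ?thesis
    unfolding K4_cycle_signs_def using Q by (intro sign_triple_product_one is_sign_cycle4_sign)
qed

definition K4_walk_sign :: "int list \<Rightarrow> nat \<Rightarrow> nat \<Rightarrow> nat \<Rightarrow> nat \<Rightarrow> int" where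
  "K4_walk_sign X a b c d = (if a = c \<or> b = d then 1 else X ! matching_index a c)"

lemma cycle4_sign_K4:
  assumes Q: "\<And>e. is_sign (Q e)" and "a < 4" "b < 4" "c < 4" "d < 4"
    and "a \<noteq> b" "b \<noteq> c" "c \<noteq> d" "d \<noteq> a"
  shows "cycle4_sign Q a b c d = K4_walk_sign (K4_cycle_signs Q) a b c d"
proof (cases "a = c \<or> b = d")
  case True
  then show ?thesis
    using cycle4_sign_degenerate[OF Q] by (simp add: K4_walk_sign_def)
next
  case False
  have less_4: "x = 0 \<or> x = 1 \<or> x = 2 \<or> x = 3" if "x < 4" for x :: nat
    using that by presburger
  show ?thesis
    using less_4[OF \<open>a < 4\<close>] less_4[OF \<open>b < 4\<close>] less_4[OF \<open>c < 4\<close>] less_4[OF \<open>d < 4\<close>] assms(6-) False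
    by (elim disjE)
      (simp_all add: K4_walk_sign_def K4_cycle_signs_def matching_index_def cycle4_sign_def
        insert_commute ac_simps)
qed

lemma hom_K4_face_sign:
  fixes F :: "nat set set"
  assumes \<sigma>: "signed_graph (grid_V n m) (grid_E n m) \<sigma>"
    and target: "signed_graph {..<K} F \<pi>" "K \<le> 4"
    and hom: "signed_hom (grid_V n m) (grid_E n m) \<sigma> {..<K} F \<pi> \<phi>"
    and "Suc i < n" "Suc j < m"
  shows "K4_walk_sign (K4_cycle_signs (\<lambda>e. if e \<in> F then \<pi> e else 1))
      (\<phi> (i, j)) (\<phi> (i, Suc j)) (\<phi> (Suc i, Suc j)) (\<phi> (Suc i, j)) =
    cycle4_sign \<sigma> (i, j) (i, Suc j) (Suc i, Suc j) (Suc i, j)"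
proof -
  let ?Q = "\<lambda>e. if e \<in> F then \<pi> e else 1"
  note E = grid_E_face[OF \<open>Suc i < n\<close> \<open>Suc j < m\<close>]
  have colour: "\<phi> v < 4" if "v \<in> grid_V n m" for v
    using hom target(2) that unfolding signed_hom_def by fastforce
  have image_edge: "{\<phi> x, \<phi> y} \<in> F" "\<phi> x \<noteq> \<phi> y" if "{x, y} \<in> grid_E n m" for x y
    using signed_hom_edge[OF target(1) hom that] by auto
  have "K4_walk_sign (K4_cycle_signs ?Q) (\<phi> (i, j)) (\<phi> (i, Suc j)) (\<phi> (Suc i, Suc j)) (\<phi> (Suc i, j))
      = cycle4_sign ?Q (\<phi> (i, j)) (\<phi> (i, Suc j)) (\<phi> (Suc i, Suc j)) (\<phi> (Suc i, j))"
    using E image_edge(2) colour assms(5,6) signed_graph_edge_sign[OF target(1)]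
    by (intro cycle4_sign_K4[symmetric]) (auto simp: grid_V_def)
  also have "\<dots> = cycle4_sign \<pi> (\<phi> (i, j)) (\<phi> (i, Suc j)) (\<phi> (Suc i, Suc j)) (\<phi> (Suc i, j))"
    using E image_edge(1) by (simp add: cycle4_sign_def)
  also have "\<dots> = cycle4_sign \<sigma> (i, j) (i, Suc j) (Suc i, Suc j) (Suc i, j)"
    using signed_hom_cycle4_sign[OF \<sigma> hom E] .
  finally show ?thesis .
qed

fun grid_adjacent :: "nat \<times> nat \<Rightarrow> nat \<times> nat \<Rightarrow> bool" where
  "grid_adjacent (i, j) (k, l) \<longleftrightarrow> (i = k \<and> Suc j = l) \<or> (j = l \<and> Suc i = k)"

lemma grid_E_adjacent:
  assumes "grid_adjacent u v" "v \<in> grid_V n m"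
  shows "{u, v} \<in> grid_E n m"
  using assms grid_E_row_edge grid_E_column_edge unfolding grid_V_def
  by (cases u; cases v) auto

text \<open>A constraint on a colouring \<open>xs\<close> of grid vertices, given by their positions in \<open>xs\<close>:
  \<open>Edge u v\<close> asks for distinct colours, \<open>Face a b c d s\<close> for a closed walk of sign \<open>s\<close> in a
  signed \<open>K\<^sub>4\<close> whose Hamiltonian cycles have the signs \<open>X\<close>.\<close>

datatype grid_constraint = Edge nat nat | Face nat nat nat nat int

fun satisfies :: "int list \<Rightarrow> nat list \<Rightarrow> grid_constraint \<Rightarrow> bool" where
  "satisfies X xs (Edge u v) \<longleftrightarrow> xs ! u \<noteq> xs ! v"
| "satisfies X xs (Face a b c d s) \<longleftrightarrow> K4_walk_sign X (xs ! a) (xs ! b) (xs ! c) (xs ! d) = s"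

fun constraint_vertices :: "grid_constraint \<Rightarrow> nat set" where
  "constraint_vertices (Edge u v) = {u, v}"
| "constraint_vertices (Face a b c d s) = {a, b, c, d}"

lemma satisfies_cong:
  "(\<And>i. i \<in> constraint_vertices con \<Longrightarrow> xs ! i = ys ! i) \<Longrightarrow> satisfies X xs con = satisfies X ys con"
  by (cases con) auto

definition extend_colourings ::
  "int list \<Rightarrow> grid_constraint list \<Rightarrow> nat list list \<Rightarrow> nat list list" where
  "extend_colourings X cs L =
     [xs @ [c]. xs \<leftarrow> L, c \<leftarrow> [0, 1, 2, 3], list_all (satisfies X (xs @ [c])) cs]"

lemma extend_colourings_memI:
  assumes "xs \<in> set L" "c < 4" "list_all (satisfies X (xs @ [c])) cs"
  shows "xs @ [c] \<in> set (extend_colourings X cs L)"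
proof -
  have "c = 0 \<or> c = 1 \<or> c = 2 \<or> c = 3"
    using assms(2) by presburger
  then show ?thesis
    using assms(1,3) unfolding extend_colourings_def by (elim disjE) auto
qed

lemma extend_colourings_complete:
  assumes "k \<le> length css" "k \<le> length ys" "\<forall>i<k. ys ! i < 4"
    and "\<forall>j<k. \<forall>con\<in>set (css ! j). (\<forall>i\<in>constraint_vertices con. i \<le> j) \<and> satisfies X ys con"
  shows "take k ys \<in> set (fold (extend_colourings X) (take k css) [[]])"
  using assms
proof (induction k)
  case 0
  then show ?case
    by simp
next
  case (Suc k)
  have "take k ys \<in> set (fold (extend_colourings X) (take k css) [[]])"
    using Suc.prems less_SucI by (intro Suc.IH) (simp, simp, blast, blast)
  moreover have "ys ! k < 4"
    using Suc.prems(3) by simp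
  moreover have "satisfies X (take k ys @ [ys ! k]) con" if "con \<in> set (css ! k)" for con
  proof -
    have "satisfies X ys con" "\<forall>i\<in>constraint_vertices con. i \<le> k"
      using Suc.prems(4) that by auto
    then show ?thesis
      using Suc.prems(2) by (subst satisfies_cong[of con _ ys]) (auto simp: nth_append)
  qed
  ultimately have "take k ys @ [ys ! k] \<in> set (extend_colourings X (css ! k)
      (fold (extend_colourings X) (take k css) [[]]))"
    by (intro extend_colourings_memI) (auto simp: list_all_iff)
  then show ?case
    using Suc.prems(1,2) by (simp add: take_Suc_conv_app_nth)
qed

text \<open>The vertex at position \<open>k\<close> of \<open>grid34_order\<close> is coloured in step \<open>k\<close>;
  \<open>grid34_constraints ! k\<close> lists the edges and faces completed in that step.\<close>

definition grid34_order :: "(nat \<times> nat) list" where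
  "grid34_order =
    [(1, 1), (1, 2), (2, 1), (2, 2), (1, 0), (2, 0), (0, 0), (0, 1), (1, 3), (2, 3), (0, 2), (0, 3)]"

definition grid34_constraints :: "grid_constraint list list" where
  "grid34_constraints =
    [[], [Edge 0 1], [Edge 0 2], [Edge 1 3, Edge 2 3, Face 0 1 3 2 (-1)], [Edge 4 0],
     [Edge 4 5, Edge 5 2, Face 4 0 2 5 (-1)], [Edge 6 4], [Edge 6 7, Edge 7 0, Face 6 7 0 4 (-1)],
     [Edge 1 8], [Edge 3 9, Edge 8 9, Face 1 8 9 3 (-1)], [Edge 7 10, Edge 10 1, Face 7 10 1 0 1],
     [Edge 10 11, Edge 11 8, Face 10 11 8 1 (-1)]]"

fun grid34_constraint_sound :: "grid_constraint \<Rightarrow> bool" where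
  "grid34_constraint_sound (Edge u v) \<longleftrightarrow> grid_adjacent (grid34_order ! u) (grid34_order ! v)"
| "grid34_constraint_sound (Face a b c d s) \<longleftrightarrow>
     (case grid34_order ! a of (i, j) \<Rightarrow>
        grid34_order ! b = (i, Suc j) \<and> grid34_order ! c = (Suc i, Suc j) \<and>
        grid34_order ! d = (Suc i, j) \<and>
        s = cycle4_sign grid34_signature (i, j) (i, Suc j) (Suc i, Suc j) (Suc i, j))"

lemma grid34_constraints_sound:
  "list_all (\<lambda>j. list_all (\<lambda>con. (\<forall>i\<in>constraint_vertices con. i \<le> j) \<and> grid34_constraint_sound con)
     (grid34_constraints ! j)) [0..<12]"
  by code_simp

lemma grid34_no_colouring:
  "list_all (\<lambda>X. fold (extend_colourings X) grid34_constraints [[]] = [])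
     [[1, 1, 1], [1, -1, -1], [-1, 1, -1], [-1, -1, 1]]"
  by code_simp

lemma grid34_order_in_grid:
  assumes "i < 12"
  shows "grid34_order ! i \<in> grid_V 3 4"
proof -
  have "set grid34_order \<subseteq> grid_V 3 4" "length grid34_order = 12"
    by (simp_all add: grid34_order_def grid_V_def)
  then show ?thesis
    using assms by (metis nth_mem subsetD)
qed

lemma grid34_hom_satisfies:
  fixes F :: "nat set set"
  assumes target: "signed_graph {..<K} F \<pi>" "K \<le> 4"
    and hom: "signed_hom (grid_V 3 4) (grid_E 3 4) grid34_signature {..<K} F \<pi> \<phi>"
    and sound: "grid34_constraint_sound con" and positions: "\<forall>i\<in>constraint_vertices con. i < 12"
  shows "satisfies (K4_cycle_signs (\<lambda>e. if e \<in> F then \<pi> e else 1)) (map \<phi> grid34_order) con"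
proof -
  have length: "length grid34_order = 12"
    by (simp add: grid34_order_def)
  show ?thesis
  proof (cases con)
    case (Edge u v)
    then have "{grid34_order ! u, grid34_order ! v} \<in> grid_E 3 4"
      using sound positions grid34_order_in_grid by (intro grid_E_adjacent) auto
    then show ?thesis
      using Edge positions length signed_hom_edge(2)[OF target(1) hom] by simp
  next
    case (Face a b c d s)
    obtain i j where a: "grid34_order ! a = (i, j)"
      by force
    then have b: "grid34_order ! b = (i, Suc j)" and c: "grid34_order ! c = (Suc i, Suc j)"
      and d: "grid34_order ! d = (Suc i, j)"
      and s: "s = cycle4_sign grid34_signature (i, j) (i, Suc j) (Suc i, Suc j) (Suc i, j)"
      using sound Face by simp_all
    have "Suc i < 3" "Suc j < 4"
      using grid34_order_in_grid[of c] positions Face c unfolding grid_V_def by auto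
    then show ?thesis
      using hom_K4_face_sign[OF signed_graph_grid34 target hom] Face positions length a b c d s
      by simp
  qed
qed

lemma grid34_no_hom_le4:
  fixes F :: "nat set set"
  assumes target: "signed_graph {..<K} F \<pi>" "K \<le> 4"
    and hom: "signed_hom (grid_V 3 4) (grid_E 3 4) grid34_signature {..<K} F \<pi> \<phi>"
  shows False
proof -
  define X where "X = K4_cycle_signs (\<lambda>e. if e \<in> F then \<pi> e else 1)"
  define ys where "ys = map \<phi> grid34_order"
  have "X \<in> set [[1, 1, 1], [1, -1, -1], [-1, 1, -1], [-1, -1, 1]]"
    unfolding X_def using signed_graph_edge_sign[OF target(1)] by (intro K4_cycle_signs_cases) simp
  then have no_colouring: "fold (extend_colourings X) grid34_constraints [[]] = []"
    using grid34_no_colouring unfolding list_all_iff by blast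
  have lengths: "length grid34_constraints = 12" "length ys = 12"
    by (simp_all add: grid34_constraints_def ys_def grid34_order_def)
  have "take 12 ys \<in> set (fold (extend_colourings X) (take 12 grid34_constraints) [[]])"
  proof (rule extend_colourings_complete)
    show "\<forall>i<12. ys ! i < 4"
      using hom target(2) grid34_order_in_grid lengths unfolding signed_hom_def ys_def by fastforce
    show "\<forall>j<12. \<forall>con\<in>set (grid34_constraints ! j).
        (\<forall>i\<in>constraint_vertices con. i \<le> j) \<and> satisfies X ys con"
    proof (intro allI impI ballI)
      fix j con assume "j < 12" "con \<in> set (grid34_constraints ! j)"
      then have "(\<forall>i\<in>constraint_vertices con. i \<le> j) \<and> grid34_constraint_sound con"
        using grid34_constraints_sound unfolding list_all_iff by auto
      then show "(\<forall>i\<in>constraint_vertices con. i \<le> j) \<and> satisfies X ys con"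
        using grid34_hom_satisfies[OF target hom] \<open>j < 12\<close> unfolding X_def ys_def by fastforce
    qed
  qed (use lengths in simp_all)
  then show False
    using no_colouring lengths by simp
qed

corollary chi_s_grid_le_6:
  assumes "signed_graph (grid_V n m) (grid_E n m) \<sigma>" "0 < m"
  shows "chi_s (grid_V n m) (grid_E n m) \<sigma> \<le> 6"
proof -
  have "(\<lambda>_. 0) \<in> {a. \<forall>i. a i < (6 :: nat)}"
    by simp
  then show ?thesis
    using chi_s_grid_le[OF assms signed_adjacency_K6 K6_columns_extendable] by (metis empty_iff)
qed

corollary chi_s_grid_le_5:
  "signed_graph (grid_V n m) (grid_E n m) \<sigma> \<Longrightarrow> 0 < m \<Longrightarrow> n \<le> 4 \<Longrightarrow>
   chi_s (grid_V n m) (grid_E n m) \<sigma> \<le> 5"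
  using chi_s_grid_le signed_adjacency_K5 K5_columns_extendable K5_column_set_nonempty by blast

lemma chi_s_grid34: "chi_s (grid_V 3 4) (grid_E 3 4) grid34_signature = 5"
proof -
  obtain \<phi> where hom: "signed_hom (grid_V 3 4) (grid_E 3 4) grid34_signature
      {..<5} (adjacency_edges K5_signing) (adjacency_signature K5_signing) \<phi>"
    using grid_hom_exists[OF signed_graph_grid34 _ signed_adjacency_K5 K5_columns_extendable
        K5_column_set_nonempty] by auto
  note target = signed_graph_adjacency[OF signed_adjacency_K5]
  obtain F :: "nat set set" and \<pi> \<phi>' where
    "signed_graph {..<chi_s (grid_V 3 4) (grid_E 3 4) grid34_signature} F \<pi>"
    "signed_hom (grid_V 3 4) (grid_E 3 4) grid34_signature
      {..<chi_s (grid_V 3 4) (grid_E 3 4) grid34_signature} F \<pi> \<phi>'"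
    using chi_s_attained[OF target hom] .
  then have "\<not> chi_s (grid_V 3 4) (grid_E 3 4) grid34_signature \<le> 4"
    using grid34_no_hom_le4 by blast
  moreover have "chi_s (grid_V 3 4) (grid_E 3 4) grid34_signature \<le> 5"
    using chi_s_le[OF target hom] .
  ultimately show ?thesis
    by simp
qed

theorem theorem4p5:
  shows "(\<forall>n m (\<sigma> :: (nat \<times> nat) set \<Rightarrow> int).
            1 \<le> n \<and> n \<le> m \<and> signed_graph (grid_V n m) (grid_E n m) \<sigma> \<longrightarrow>
              chi_s (grid_V n m) (grid_E n m) \<sigma> \<le> 6 \<and>
              (n \<le> 4 \<longrightarrow> chi_s (grid_V n m) (grid_E n m) \<sigma> \<le> 5)) \<and>
         (\<exists>n m (\<sigma> :: (nat \<times> nat) set \<Rightarrow> int).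
            1 \<le> n \<and> n \<le> m \<and> signed_graph (grid_V n m) (grid_E n m) \<sigma> \<and>
            chi_s (grid_V n m) (grid_E n m) \<sigma> = 5)"
proof (rule conjI)
  show "\<forall>n m (\<sigma> :: (nat \<times> nat) set \<Rightarrow> int).
      1 \<le> n \<and> n \<le> m \<and> signed_graph (grid_V n m) (grid_E n m) \<sigma> \<longrightarrow>
        chi_s (grid_V n m) (grid_E n m) \<sigma> \<le> 6 \<and>
        (n \<le> 4 \<longrightarrow> chi_s (grid_V n m) (grid_E n m) \<sigma> \<le> 5)"
    by (auto intro: chi_s_grid_le_6 chi_s_grid_le_5)
  show "\<exists>n m (\<sigma> :: (nat \<times> nat) set \<Rightarrow> int).
      1 \<le> n \<and> n \<le> m \<and> signed_graph (grid_V n m) (grid_E n m) \<sigma> \<and>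
      chi_s (grid_V n m) (grid_E n m) \<sigma> = 5"
    using signed_graph_grid34 chi_s_grid34 by (intro exI[of _ 3] exI[of _ 4] exI) simp
qed

end
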